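(* Let $m \ge \ell \ge k \ge 1$ and let ${\mathcal{C}} = {\mathcal{C}}[\ell+m,\ell,k]$ be constructed as in the context, for any choice of design parameters $h \in \{0,\dots,k-1\}$ at every level of the recursion. Then every element of ${\mathcal{C}}$ is an $\ell$-dimensional subspace of $W$, and for all $U,V\in{\mathcal{C}}$ with $U\neq V$ we have $\dim(U\cap V)\le k-1$. Consequently $d(U,V)\ge 2(\ell-k+1)$ for all distinct $U,V\in{\mathcal{C}}$.
   Context: Let $q$ be a prime power. Subspace distance: for subspaces $U,V$ of an $\mathbb{F}_q$-vector space, $d(U,V) = \dim U + \dim V - 2\dim(U\cap V)$. Kötter–Kschischang code ${\mathcal{K}}[n,\ell,k]$ (for $n-\ell \ge \ell \ge k \ge 1$): put $m=n-\ell$, $\mathbb{F}=\mathbb{F}_{q^m}$, fix $\mathbb{F}_q$-linearly independent $\alpha_1,\dots,\alpha_\ell \in \mathbb{F}$, let $\langle A\rangle$ be their $\mathbb{F}_q$-span and $W = \langle A\rangle \times \mathbb{F}$ (an $n$-dimensional $\mathbb{F}_q$-space, vectors written $(v_1,v_2)$). For a linearized polynomial $f(x)=\sum_{i=0}^{k-1} f_i x^{q^i}$ with $f_i\in\mathbb{F}$, let ${\mathcal{E}}(f)=\mathrm{span}_{\mathbb{F}_q}\{(\alpha_i,f(\alpha_i)) : 1\le i\le \ell\}$, and ${\mathcal{K}}[n,\ell,k]=\{{\mathcal{E}}(f)\}$. It is known that $|{\mathcal{K}}[n,\ell,k]| = q^{mk}$ and that distinct elements of ${\mathcal{K}}$ intersect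 in dimension at most $k-1$. Any $n$-dimensional $\mathbb{F}_q$-space is identified with such a $W$ via a fixed linear isomorphism. Recursive code ${\mathcal{C}}[\ell+m,\ell,k]$ (for $m\ge \ell \ge k$), in $W=\langle A\rangle\times\mathbb{F}$, $\mathbb{F}=\mathbb{F}_{q^m}$: choose a design parameter $h=h_{\ell+m}\in\{0,\dots,k-1\}$. If $m<2(\ell-h)$ or $\ell-h<k$, set ${\mathcal{C}}={\mathcal{K}}[\ell+m,\ell,k]$. Otherwise let ${\mathcal{C}}[m,\ell-h,k]=\{U_1,\dots,U_N\}$ be the recursively constructed code inside $\mathbb{F}$ (viewed as an $m$-dimensional $\mathbb{F}_q$-space), $N$ its size, and fix a basis $e^\sigma_1,\dots,e^\sigma_{\ell-h}$ of each $U_\sigma$. If $h>0$, let $t=\min\{\lfloor \ell/h\rfloor, N\}$ and $S_\sigma=\{(\alpha_j,0) : (\sigma-1)h+1\le j\le \sigma h\}$; if $h=0$, let $t=N$ and $S_\sigma=\emptyset$. Let $T_\sigma=\{(0,e^\sigma_j): 1\le j\le \ell-h\}$, $V_\sigma=\mathrm{span}(S_\sigma\cup T_\sigma)$ for $1\le\sigma\le t$, ${\mathcal{B}}=\{V_\sigma\}$, and ${\mathcal{C}}={\mathcal{K}}[\ell+m,\ell,k]\cup{\mathcal{B}}$. *)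

theory Defs
  imports Main "HOL.Vector_Spaces" "HOL-Library.Function_Algebras" "HOL-Library.Product_Plus" "HOL-Algebra.Ring"
begin

text \<open>Vectors over F_q are functions nat => 'a; the standard n-dimensional space is
  the set of vectors supported on {0..<n}.\<close>

definition Vsp :: "nat \<Rightarrow> (nat \<Rightarrow> 'a::zero) set" where
  "Vsp n = {v. \<forall>i\<ge>n. v i = 0}"

definition fscale :: "'a::times \<Rightarrow> (nat \<Rightarrow> 'a) \<Rightarrow> nat \<Rightarrow> 'a" where
  "fscale c v = (\<lambda>i. c * v i)"

definition pscale :: "'a::times \<Rightarrow> (nat \<Rightarrow> 'a) \<times> (nat \<Rightarrow> 'a) \<Rightarrow> (nat \<Rightarrow> 'a) \<times> (nat \<Rightarrow> 'a)" where
  "pscale c p = (fscale c (fst p), fscale c (snd p))"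

abbreviation fspan :: "(nat \<Rightarrow> 'a::field) set \<Rightarrow> (nat \<Rightarrow> 'a) set" where
  "fspan \<equiv> module.span fscale"

abbreviation pspan :: "((nat \<Rightarrow> 'a::field) \<times> (nat \<Rightarrow> 'a)) set \<Rightarrow> ((nat \<Rightarrow> 'a) \<times> (nat \<Rightarrow> 'a)) set" where
  "pspan \<equiv> module.span pscale"

abbreviation fdim :: "(nat \<Rightarrow> 'a::field) set \<Rightarrow> nat" where
  "fdim \<equiv> vector_space.dim fscale"

abbreviation fsubspace :: "(nat \<Rightarrow> 'a::field) set \<Rightarrow> bool" where
  "fsubspace \<equiv> module.subspace fscale"

abbreviation findependent :: "(nat \<Rightarrow> 'a::field) set \<Rightarrow> bool" where
  "findependent S \<equiv> \<not> module.dependent fscale S"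

definition subdist :: "(nat \<Rightarrow> 'a::field) set \<Rightarrow> (nat \<Rightarrow> 'a) set \<Rightarrow> int" where
  "subdist U V = int (fdim U) + int (fdim V) - 2 * int (fdim (U \<inter> V))"

text \<open>Linearized polynomial f(x) = sum_{i<k} f_i x^(q^i), evaluated in the field R (a model of F_{q^m}).\<close>
definition linpoly :: "(nat \<Rightarrow> 'a::{field,finite}) ring \<Rightarrow> nat \<Rightarrow> (nat \<Rightarrow> nat \<Rightarrow> 'a) \<Rightarrow> (nat \<Rightarrow> 'a) \<Rightarrow> (nat \<Rightarrow> 'a)" where
  "linpoly R k f x = (\<Sum>i<k. f i \<otimes>\<^bsub>R\<^esub> (x [^]\<^bsub>R\<^esub> (card (UNIV :: 'a set) ^ i)))"

definition Esp :: "(nat \<Rightarrow> 'a::{field,finite}) ring \<Rightarrow> (nat \<Rightarrow> nat \<Rightarrow> 'a) \<Rightarrow> nat \<Rightarrow> nat \<Rightarrow> (nat \<Rightarrow> nat \<Rightarrow> 'a)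
     \<Rightarrow> ((nat \<Rightarrow> 'a) \<times> (nat \<Rightarrow> 'a)) set" where
  "Esp R \<alpha> l k f = pspan ((\<lambda>i. (\<alpha> i, linpoly R k f (\<alpha> i))) ` {1..l})"

text \<open>Koetter-Kschischang code, transported to the standard space via phi.\<close>
definition KKcode :: "(nat \<Rightarrow> 'a::{field,finite}) ring \<Rightarrow> (nat \<Rightarrow> nat \<Rightarrow> 'a) \<Rightarrow> nat \<Rightarrow> nat
     \<Rightarrow> ((nat \<Rightarrow> 'a) \<times> (nat \<Rightarrow> 'a) \<Rightarrow> (nat \<Rightarrow> 'a)) \<Rightarrow> (nat \<Rightarrow> 'a) set set" where
  "KKcode R \<alpha> l k \<phi> = {\<phi> ` Esp R \<alpha> l k f | f. \<forall>i<k. f i \<in> carrier R}"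

text \<open>Admissible data for the ambient W = <A> x F with F = F_{q^m} (n = l + m):
  R is a field structure on the m-dimensional space Vsp m extending the F_q-scalars
  (hence a model of F_{q^m}), alpha_1..alpha_l are F_q-independent elements of F,
  and phi is an F_q-linear isomorphism from W onto the standard space Vsp n.\<close>
definition kk_setup :: "nat \<Rightarrow> nat \<Rightarrow> nat \<Rightarrow> (nat \<Rightarrow> 'a::{field,finite}) ring \<Rightarrow> (nat \<Rightarrow> nat \<Rightarrow> 'a)
     \<Rightarrow> ((nat \<Rightarrow> 'a) \<times> (nat \<Rightarrow> 'a) \<Rightarrow> (nat \<Rightarrow> 'a)) \<Rightarrow> bool" where
  "kk_setup m n l R \<alpha> \<phi> \<longleftrightarrow>
     field R \<and> carrier R = Vsp m \<and> add R = (+) \<and> zero R = 0 \<and>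
     (\<forall>c x y. x \<in> carrier R \<longrightarrow> y \<in> carrier R \<longrightarrow> x \<otimes>\<^bsub>R\<^esub> fscale c y = fscale c (x \<otimes>\<^bsub>R\<^esub> y)) \<and>
     \<alpha> ` {1..l} \<subseteq> Vsp m \<and> inj_on \<alpha> {1..l} \<and> findependent (\<alpha> ` {1..l}) \<and>
     Vector_Spaces.linear pscale fscale \<phi> \<and>
     bij_betw \<phi> {(a, b). a \<in> fspan (\<alpha> ` {1..l}) \<and> b \<in> Vsp m} (Vsp n)"

text \<open>The generating set S_sigma \<union> T_sigma of V_sigma in A x F (l here is the inner dimension l - h).\<close>
definition Vblock :: "(nat \<Rightarrow> nat \<Rightarrow> 'a::zero) \<Rightarrow> nat \<Rightarrow> nat \<Rightarrow> (nat \<Rightarrow> nat \<Rightarrow> nat \<Rightarrow> 'a) \<Rightarrow> nat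
     \<Rightarrow> ((nat \<Rightarrow> 'a) \<times> (nat \<Rightarrow> 'a)) set" where
  "Vblock \<alpha> h l e \<sigma> =
     (\<lambda>j. (\<alpha> j, 0)) ` {(\<sigma> - 1) * h + 1 .. \<sigma> * h} \<union> (\<lambda>j. (0, e \<sigma> j)) ` {1..l}"

text \<open>Ccode n l k C: C is a possible output of the recursive construction C[n,l,k]
  (n = l + m), for some choice of all design parameters h and of all auxiliary data
  (field models, alphas, identifications, enumerations, bases) at every level.\<close>
inductive Ccode :: "nat \<Rightarrow> nat \<Rightarrow> nat \<Rightarrow> (nat \<Rightarrow> 'a::{field,finite}) set set \<Rightarrow> bool" where
  base: "\<lbrakk> 1 \<le> k; k \<le> l; l \<le> m; h < k; m < 2 * (l - h) \<or> l - h < k;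
          kk_setup m (l + m) l R \<alpha> \<phi> \<rbrakk>
         \<Longrightarrow> Ccode (l + m) l k (KKcode R \<alpha> l k \<phi>)"
| recur: "\<lbrakk> 1 \<le> k; k \<le> l; l \<le> m; h < k; \<not> (m < 2 * (l - h) \<or> l - h < k);
          kk_setup m (l + m) l R \<alpha> \<phi>;
          Ccode m (l - h) k D;
          bij_betw U {1..card D} D;
          t = (if h > 0 then min (l div h) (card D) else card D);
          \<forall>\<sigma>\<in>{1..t}. inj_on (e \<sigma>) {1..l - h} \<and> findependent (e \<sigma> ` {1..l - h})
                      \<and> fspan (e \<sigma> ` {1..l - h}) = U \<sigma> \<rbrakk>
         \<Longrightarrow> Ccode (l + m) l k
               (KKcode R \<alpha> l k \<phi> \<union> {\<phi> ` pspan (Vblock \<alpha> h (l - h) e \<sigma>) | \<sigma>. \<sigma> \<in> {1..t}})"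

end

theory Submission
  imports Defs "HOL-Algebra.Sylow" "HOL-Algebra.Multiplicative_Group"
    "HOL-Computational_Algebra.Primes"
begin

(*
  All subspaces are first studied inside
  W = <A> x F and only at the end transported into the standard space by the linear
  bijection phi, which preserves dimensions of subspaces and of their intersections.

  - A Koetter-Kschischang subspace E(f) is the graph of the F_q-linear map
    x |-> f(x) over <A>; it has dimension l.  Two distinct graphs agree only on roots
    of a nonzero polynomial of degree \<le> q^(k-1) in F = F_(q^m), so their intersection
    has at most q^(k-1) vectors and hence dimension \<le> k - 1.  F_q-linearity of f rests
    on the Frobenius map being additive, since q is a power of the characteristic.
  - A block V_sigma is spanned by h alphas (paired with 0) and a basis of U_sigma
    (paired with 0), so it has dimension h + (l - h) = l.  It meets E(f) in a graph
    over h alphas (dimension \<le> h < k), and it meets another block V_tau inside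
    0 x (U_sigma \<inter> U_tau), which is small by the induction hypothesis on C[m,l-h,k].
*)

section \<open>The two ambient vector spaces\<close>

lemma vector_space_fscale: "vector_space (fscale :: 'a::field \<Rightarrow> (nat \<Rightarrow> 'a) \<Rightarrow> _)"
  by unfold_locales (auto simp: fscale_def algebra_simps fun_eq_iff)

lemma vector_space_pscale:
  "vector_space (pscale :: 'a::field \<Rightarrow> (nat \<Rightarrow> 'a) \<times> (nat \<Rightarrow> 'a) \<Rightarrow> _)"
  by unfold_locales (auto simp: pscale_def fscale_def algebra_simps fun_eq_iff)

interpretation V: vector_space "fscale :: 'a::field \<Rightarrow> (nat \<Rightarrow> 'a) \<Rightarrow> _"
  by (rule vector_space_fscale)
interpretation P: vector_space "pscale :: 'a::field \<Rightarrow> (nat \<Rightarrow> 'a) \<times> (nat \<Rightarrow> 'a) \<Rightarrow> _"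
  by (rule vector_space_pscale)
interpretation VP: vector_space_pair "pscale :: 'a::field \<Rightarrow> (nat \<Rightarrow> 'a) \<times> (nat \<Rightarrow> 'a) \<Rightarrow> _" fscale ..
interpretation PV: vector_space_pair fscale "pscale :: 'a::field \<Rightarrow> (nat \<Rightarrow> 'a) \<times> (nat \<Rightarrow> 'a) \<Rightarrow> _" ..

text \<open>Vectors are manipulated as whole functions; pointwise unfolding of the
  function-space operations only obstructs the simplifier.\<close>
declare plus_fun_apply[simp del] zero_fun_apply[simp del] times_fun_apply[simp del]
  one_fun_apply[simp del]

lemma linear_fst: "Vector_Spaces.linear pscale fscale (fst :: (nat \<Rightarrow> 'a::field) \<times> _ \<Rightarrow> _)"
  by (rule Vector_Spaces.linear_iff[THEN iffD2])
    (auto simp: pscale_def vector_space_fscale vector_space_pscale)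

lemma linear_snd: "Vector_Spaces.linear pscale fscale (snd :: (nat \<Rightarrow> 'a::field) \<times> _ \<Rightarrow> _)"
  by (rule Vector_Spaces.linear_iff[THEN iffD2])
    (auto simp: pscale_def vector_space_fscale vector_space_pscale)

lemma linear_Pair_zero:
  "Vector_Spaces.linear fscale pscale (\<lambda>v::nat \<Rightarrow> 'a::field. (0::nat \<Rightarrow> 'a, v))"
  by (rule Vector_Spaces.linear_iff[THEN iffD2])
    (simp add: pscale_def vector_space_fscale vector_space_pscale V.scale_zero_right)

lemma fst_in_span: "x \<in> P.span T \<Longrightarrow> fst x \<in> fspan (fst ` T)"
  using VP.linear_span_image[OF linear_fst, of T] by blast

lemma snd_in_span: "x \<in> P.span T \<Longrightarrow> snd x \<in> fspan (snd ` T)"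
  using VP.linear_span_image[OF linear_snd, of T] by blast

lemma Vsp_subspace: "fsubspace (Vsp m :: (nat \<Rightarrow> 'a::field) set)"
  by (auto simp: V.subspace_def Vsp_def fscale_def plus_fun_apply zero_fun_apply)

lemma fspan_Vsp: "S \<subseteq> Vsp m \<Longrightarrow> fspan S \<subseteq> (Vsp m :: (nat \<Rightarrow> 'a::field) set)"
  using V.span_minimal[OF _ Vsp_subspace] by blast

lemma finite_Vsp: "finite (Vsp m :: (nat \<Rightarrow> 'a::{zero,finite}) set)"
proof -
  let ?extend = "\<lambda>xs i. if i < m then xs ! i else 0"
  have "Vsp m \<subseteq> ?extend ` {xs :: 'a list. set xs \<subseteq> UNIV \<and> length xs = m}"
  proof
    fix v :: "nat \<Rightarrow> 'a" assume "v \<in> Vsp m"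
    thus "v \<in> ?extend ` {xs. set xs \<subseteq> UNIV \<and> length xs = m}"
      by (intro image_eqI[of _ _ "map v [0..<m]"]) (auto simp: Vsp_def fun_eq_iff)
  qed
  moreover have "finite {xs :: 'a list. set xs \<subseteq> UNIV \<and> length xs = m}"
    by (rule finite_lists_length_eq) simp
  ultimately show ?thesis by (rule finite_subset[OF _ finite_imageI])
qed

section \<open>Linear algebra over an arbitrary field\<close>

lemma (in vector_space) span_Int_disjoint:
  assumes T: "independent T" and A: "A \<subseteq> T" and B: "B \<subseteq> T" and AB: "A \<inter> B = {}"
    and x: "x \<in> span A" "x \<in> span B"
  shows "x = 0"
proof -
  have iA: "independent A" using T A by (auto intro: dependent_mono)
  have eA: "representation T x = representation A x" using representation_extend[OF T x(1) A] .
  have eB: "representation T x = representation B x" using representation_extend[OF T x(2) B] .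
  have zero: "representation A x b = 0" for b
  proof (rule ccontr)
    assume "representation A x b \<noteq> 0"
    hence "b \<in> A" "b \<in> B" using representation_ne_zero eA eB by metis+
    thus False using AB by auto
  qed
  have "x = (\<Sum>b | representation A x b \<noteq> 0. representation A x b *s b)"
    using sum_nonzero_representation_eq[OF iA x(1)] by simp
  also have "\<dots> = 0" using zero by simp
  finally show ?thesis .
qed

text \<open>Over a finite field with q elements, the span of d independent vectors has at
  least q^d elements (distinct coefficient vectors give distinct combinations).\<close>
lemma (in vector_space) card_span_ge:
  assumes B: "finite B" "independent B" and fin: "finite (span B)"
  shows "card (UNIV :: 'a set) ^ card B \<le> card (span B)"
proof -
  define comb where "comb = (\<lambda>c. \<Sum>b\<in>B. c b *s b)"
  have inj: "inj_on comb (B \<rightarrow>\<^sub>E UNIV)"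
  proof (rule inj_onI)
    fix c c' assume c: "c \<in> B \<rightarrow>\<^sub>E UNIV" and c': "c' \<in> B \<rightarrow>\<^sub>E UNIV" and eq: "comb c = comb c'"
    have "(\<Sum>b\<in>B. (c b - c' b) *s b) = comb c - comb c'"
      by (simp add: comb_def scale_left_diff_distrib sum_subtractf)
    hence "(\<Sum>b\<in>B. (c b - c' b) *s b) = 0" using eq by simp
    hence "c b = c' b" if "b \<in> B" for b
      using dependent_finite[OF B(1)] B(2) that by (metis eq_iff_diff_eq_0)
    moreover have "c b = c' b" if "b \<notin> B" for b
      using c c' that by (simp add: PiE_def extensional_def)
    ultimately show "c = c'" by blast
  qed
  have "comb ` (B \<rightarrow>\<^sub>E UNIV) \<subseteq> span B"
    unfolding comb_def by (auto intro: span_sum span_scale span_base)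
  hence "card (B \<rightarrow>\<^sub>E (UNIV :: 'a set)) \<le> card (span B)"
    using card_inj_on_le[OF inj _ fin] by blast
  thus ?thesis using B by (simp add: card_PiE)
qed

lemma (in vector_space) card_subspace_ge:
  assumes X: "subspace X" "finite X"
  shows "card (UNIV :: 'a set) ^ dim X \<le> card X"
proof -
  obtain B where B: "B \<subseteq> X" "independent B" "X \<subseteq> span B" "card B = dim X"
    using basis_exists by blast
  have XB: "span B = X" using span_minimal[OF B(1) X(1)] B(3) by blast
  have "finite B" using B(1) X(2) finite_subset by blast
  thus ?thesis using card_span_ge[OF _ B(2)] X(2) unfolding XB B(4) by blast
qed

lemma (in vector_space_pair) independent_if_independent_image:
  assumes g: "Vector_Spaces.linear s1 s2 g" and inj: "inj_on g T" and ind: "vs2.independent (g ` T)"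
  shows "vs1.independent T"
proof
  assume "vs1.dependent T"
  then obtain a where a: "a \<in> T" "a \<in> vs1.span (T - {a})" using vs1.dependent_def by blast
  hence "g a \<in> g ` vs1.span (T - {a})" by blast
  also have "\<dots> = vs2.span (g ` (T - {a}))" using linear_span_image[OF g] by simp
  also have "g ` (T - {a}) = g ` T - {g a}" using inj a(1) by (auto simp: inj_on_def)
  finally show False using ind a(1) vs2.dependent_def by blast
qed

lemma (in vector_space_pair) dim_image_inj:
  assumes f: "Vector_Spaces.linear s1 s2 f" and inj: "inj_on f (vs1.span S)"
  shows "vs2.dim (f ` S) = vs1.dim S"
proof -
  obtain B where B: "B \<subseteq> S" "vs1.independent B" "S \<subseteq> vs1.span B" "card B = vs1.dim S"
    using vs1.basis_exists by blast
  have span_B: "vs1.span B = vs1.span S"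
    using B(1,3) vs1.span_mono vs1.span_span by blast
  have injB: "inj_on f (vs1.span B)" using inj span_B by simp
  have "vs2.span (f ` S) = vs2.span (f ` B)"
    using span_B linear_span_image[OF f] by metis
  hence "vs2.dim (f ` S) = card (f ` B)"
    by (metis vs2.dim_span vs2.dim_span_eq_card_independent
        linear_independent_injective_image[OF f B(2) injB])
  also have "\<dots> = card B" using inj_on_subset[OF injB vs1.span_superset] by (rule card_image)
  finally show ?thesis using B(4) by simp
qed

definition (in vector_space) dim_code :: "'b set set \<Rightarrow> nat \<Rightarrow> nat \<Rightarrow> bool" where
  "dim_code C l k \<longleftrightarrow> (\<forall>U\<in>C. subspace U \<and> dim U = l) \<and>
     (\<forall>U\<in>C. \<forall>V\<in>C. U \<noteq> V \<longrightarrow> dim (U \<inter> V) \<le> k - 1)"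

lemma (in vector_space) dim_code_Un:
  assumes "dim_code C l k" "dim_code D l k" "\<And>U V. U \<in> C \<Longrightarrow> V \<in> D \<Longrightarrow> dim (U \<inter> V) \<le> k - 1"
  shows "dim_code (C \<union> D) l k"
  using assms unfolding dim_code_def by (metis Int_commute Un_iff)

lemma (in vector_space_pair) dim_code_image:
  assumes f: "Vector_Spaces.linear s1 s2 f" and inj: "inj_on f D" and CD: "\<forall>U\<in>C. U \<subseteq> D"
    and C: "vs1.dim_code C l k"
  shows "vs2.dim_code ((`) f ` C) l k"
proof -
  have dim: "vs2.dim (f ` U) = vs1.dim U" if "vs1.subspace U" "U \<subseteq> D" for U
    using dim_image_inj[OF f] inj_on_subset[OF inj] that vs1.span_eq_iff by metis
  have "vs2.dim (f ` U \<inter> f ` V) \<le> k - 1" if "U \<in> C" "V \<in> C" "f ` U \<noteq> f ` V" for U V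
  proof -
    have "f ` U \<inter> f ` V = f ` (U \<inter> V)" using inj_on_image_Int[OF inj] CD that by metis
    moreover have "vs1.subspace (U \<inter> V)" using C that unfolding vs1.dim_code_def
      by (blast intro: vs1.subspace_inter)
    ultimately have "vs2.dim (f ` U \<inter> f ` V) = vs1.dim (U \<inter> V)"
      using dim[of "U \<inter> V"] CD that by auto
    also have "\<dots> \<le> k - 1" using C that unfolding vs1.dim_code_def by blast
    finally show ?thesis .
  qed
  thus ?thesis using C CD dim linear_subspace_image[OF f]
    unfolding vs1.dim_code_def vs2.dim_code_def by auto
qed


section \<open>Finite fields\<close>

text \<open>The base field F_q is the finite type 'a. We need that x^q = x for its elements
  and that q is a power of the characteristic, so that the q-power map on any
  extension field is a power of the Frobenius map and hence additive.\<close>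

definition add_group_of :: "'a::ab_group_add monoid" where
  "add_group_of = \<lparr>carrier = UNIV, monoid.mult = (+), one = 0\<rparr>"

definition mult_group_of :: "'a::field monoid" where
  "mult_group_of = \<lparr>carrier = UNIV - {0}, monoid.mult = (*), one = 1\<rparr>"

lemma add_group_of_group: "group (add_group_of :: 'a::ab_group_add monoid)"
  by (rule groupI) (auto simp: add_group_of_def add.assoc intro: exI[of _ "- x" for x])

lemma mult_group_of_group: "group (mult_group_of :: 'a::field monoid)"
proof (rule groupI)
  fix x :: 'a assume "x \<in> carrier mult_group_of"
  thus "\<exists>y\<in>carrier mult_group_of. y \<otimes>\<^bsub>mult_group_of\<^esub> x = \<one>\<^bsub>mult_group_of\<^esub>"
    by (intro bexI[of _ "inverse x"]) (auto simp: mult_group_of_def)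
qed (auto simp: mult_group_of_def mult.assoc)

lemma add_group_of_pow:
  "x [^]\<^bsub>(add_group_of :: 'a::ring_1 monoid)\<lparr>carrier := H\<rparr>\<^esub> (n::nat) = of_nat n * x"
  by (induction n) (simp_all add: add_group_of_def algebra_simps)

lemma mult_group_of_pow: "x [^]\<^bsub>(mult_group_of :: 'a::field monoid)\<^esub> (n::nat) = x ^ n"
  by (induction n) (simp_all add: mult_group_of_def mult.commute)

text \<open>Lagrange's theorem in the multiplicative group gives x^(q-1) = 1 for x \<noteq> 0.\<close>
lemma finite_field_power_card: "(x::'a::{field,finite}) ^ card (UNIV :: 'a set) = x"
proof (cases "x = 0")
  case False
  have "x \<in> carrier (mult_group_of :: 'a monoid)" using False by (simp add: mult_group_of_def)
  hence "x ^ order (mult_group_of :: 'a monoid) = 1"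
    using group.pow_order_eq_1[OF mult_group_of_group] unfolding mult_group_of_pow
    by (simp add: mult_group_of_def)
  moreover have "order (mult_group_of :: 'a monoid) = card (UNIV :: 'a set) - 1"
    by (simp add: order_def mult_group_of_def card_Diff_singleton)
  moreover have "card (UNIV :: 'a set) = Suc (card (UNIV :: 'a set) - 1)"
    using finite_UNIV_card_ge_0[where ?'a = 'a] by simp
  ultimately have "x ^ card (UNIV :: 'a set) = x * x ^ order (mult_group_of :: 'a monoid)"
    by (metis power_Suc)
  also have "\<dots> = x" using \<open>x ^ order mult_group_of = 1\<close> by simp
  finally show ?thesis .
qed (use finite_UNIV_card_ge_0[where ?'a = 'a] in auto)

lemma finite_field_power_card_power: "(x::'a::{field,finite}) ^ (card (UNIV :: 'a set) ^ n) = x"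
  by (induction n) (simp_all add: finite_field_power_card power_mult)

lemma finite_field_prime_char: "prime CHAR('a::{field,finite})"
  using prime_CHAR_semidom[where ?'a = 'a] finite_imp_CHAR_pos[where ?'a='a] by auto

text \<open>A prime r dividing q yields (Sylow) an additive subgroup of order r, whose
  nonzero elements x satisfy r x = 0; so r is the characteristic.\<close>
lemma finite_field_prime_dvd_card:
  assumes r: "prime r" and dvd: "r dvd card (UNIV :: 'a::{field,finite} set)"
  shows "r = CHAR('a)"
proof -
  obtain c where c: "card (UNIV :: 'a set) = r ^ 1 * c" using dvd by auto
  have "order (add_group_of :: 'a monoid) = r ^ 1 * c"
    using c by (simp add: order_def add_group_of_def)
  hence "\<exists>H. subgroup H (add_group_of :: 'a monoid) \<and> card H = r ^ 1"
    by (rule sylow_thm[OF r add_group_of_group]) (simp add: add_group_of_def)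
  then obtain H where H: "subgroup H (add_group_of :: 'a monoid)" "card H = r ^ 1" by blast
  have "\<not> H \<subseteq> {0}"
    using H(2) card_mono[of "{0}" H] prime_ge_2_nat[OF r] by auto
  then obtain x where x: "x \<in> H" "x \<noteq> 0" by blast
  interpret H: group "(add_group_of :: 'a monoid)\<lparr>carrier := H\<rparr>"
    using subgroup.subgroup_is_group[OF H(1) add_group_of_group] .
  have "x [^]\<^bsub>(add_group_of :: 'a monoid)\<lparr>carrier := H\<rparr>\<^esub>
      order ((add_group_of :: 'a monoid)\<lparr>carrier := H\<rparr>) = 0"
    using H.pow_order_eq_1[of x] x by (simp add: add_group_of_def)
  hence "of_nat r * x = 0" using H(2) by (simp add: add_group_of_pow order_def)
  hence "CHAR('a) dvd r" using x by (simp add: of_nat_eq_0_iff_char_dvd)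
  thus ?thesis using primes_dvd_imp_eq[OF finite_field_prime_char[where 'a='a] r] by simp
qed

lemma finite_field_card_char_power:
  "\<exists>e. card (UNIV :: 'a::{field,finite} set) = CHAR('a) ^ e"
proof -
  define q where "q = card (UNIV :: 'a set)"
  have pos: "q > 0" by (simp add: q_def finite_UNIV_card_ge_0)
  have "prime_factors q \<subseteq> {CHAR('a)}"
    using finite_field_prime_dvd_card by (auto simp: q_def)
  hence "prime_factors q = {} \<or> prime_factors q = {CHAR('a)}" by blast
  thus ?thesis
  proof
    assume "prime_factors q = {}"
    hence "q = CHAR('a) ^ 0" using prime_factorization_nat[OF pos] by simp
    thus ?thesis unfolding q_def by blast
  next
    assume "prime_factors q = {CHAR('a)}"
    hence "q = CHAR('a) ^ multiplicity CHAR('a) q" using prime_factorization_nat[OF pos] by simp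
    thus ?thesis unfolding q_def by blast
  qed
qed

text \<open>A field has at least two elements, so q-powers are strictly increasing.\<close>
lemma card_UNIV_ge_2: "card (UNIV :: 'a::{field,finite} set) \<ge> 2"
proof -
  have "{0::'a, 1} \<subseteq> UNIV" by simp
  hence "card {0::'a, 1} \<le> card (UNIV :: 'a set)" by (intro card_mono) auto
  thus ?thesis by simp
qed

section \<open>A model of the extension field F_(q^m)\<close>

primrec linpoly_UP :: "(nat \<Rightarrow> 'a::{field,finite}) ring \<Rightarrow> (nat \<Rightarrow> nat \<Rightarrow> 'a) \<Rightarrow> nat
    \<Rightarrow> nat \<Rightarrow> (nat \<Rightarrow> 'a)" where
  "linpoly_UP R f 0 = monom (UP R) \<zero>\<^bsub>R\<^esub> 0"
| "linpoly_UP R f (Suc j) =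
     linpoly_UP R f j \<oplus>\<^bsub>UP R\<^esub> monom (UP R) (f j) (card (UNIV::'a set) ^ j)"

locale vsp_field = field R for R :: "(nat \<Rightarrow> 'a::{field,finite}) ring" (structure)
  + fixes m :: nat
  assumes carrier_Vsp: "carrier R = Vsp m" and add_R: "add R = (+)" and zero_R: "zero R = 0"
    and mult_fscale_right: "\<And>c x y. x \<in> carrier R \<Longrightarrow> y \<in> carrier R \<Longrightarrow>
      x \<otimes>\<^bsub>R\<^esub> fscale c y = fscale c (x \<otimes>\<^bsub>R\<^esub> y)"
begin

lemma add_R_eq[simp]: "x \<oplus> y = x + y" by (simp add: add_R)
lemma zero_R_eq[simp]: "\<zero> = 0" by (simp add: zero_R)
lemma fscale_closed_R[intro,simp]: "x \<in> carrier R \<Longrightarrow> fscale c x \<in> carrier R"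
  by (simp add: carrier_Vsp V.subspace_scale[OF Vsp_subspace])
lemma add_closed_R[intro,simp]: "x \<in> carrier R \<Longrightarrow> y \<in> carrier R \<Longrightarrow> x + y \<in> carrier R"
  by (simp add: carrier_Vsp V.subspace_add[OF Vsp_subspace])
lemma zero_closed_R[intro,simp]: "0 \<in> carrier R"
  by (simp add: carrier_Vsp V.subspace_0[OF Vsp_subspace])
lemma sum_closed_R[intro]: "(\<And>i. i \<in> A \<Longrightarrow> f i \<in> carrier R) \<Longrightarrow> sum f A \<in> carrier R"
  by (simp add: carrier_Vsp V.subspace_sum[OF Vsp_subspace])

lemma r_null_R[simp]: "x \<in> carrier R \<Longrightarrow> x \<otimes> 0 = 0"
  using r_null by simp

lemma mult_fscale_left: "x \<in> carrier R \<Longrightarrow> y \<in> carrier R \<Longrightarrow> fscale c x \<otimes> y = fscale c (x \<otimes> y)"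
  by (metis mult_fscale_right m_comm fscale_closed_R)

lemma mult_sum_right: "x \<in> carrier R \<Longrightarrow> (\<And>i. i \<in> A \<Longrightarrow> f i \<in> carrier R) \<Longrightarrow>
    x \<otimes> sum f A = (\<Sum>i\<in>A. x \<otimes> f i)"
proof (induction A rule: infinite_finite_induct)
  case (insert a A)
  have "x \<otimes> sum f (insert a A) = x \<otimes> (f a \<oplus> sum f A)" using insert by simp
  also have "\<dots> = x \<otimes> f a \<oplus> x \<otimes> sum f A" using insert by (intro r_distr) auto
  finally show ?case using insert by simp
qed (auto)

lemma mult_sum_left: "x \<in> carrier R \<Longrightarrow> (\<And>i. i \<in> A \<Longrightarrow> f i \<in> carrier R) \<Longrightarrow>
    sum f A \<otimes> x = (\<Sum>i\<in>A. f i \<otimes> x)"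
  using mult_sum_right[of x A f] by (simp add: m_comm sum_closed_R)

lemma pow_fscale: "x \<in> carrier R \<Longrightarrow> (fscale c x) [^] (n::nat) = fscale (c ^ n) (x [^] n)"
proof (induction n)
  case 0 thus ?case by (simp add: V.scale_one)
next
  case (Suc n)
  have "fscale c x [^] Suc n = fscale (c ^ n) (x [^] n) \<otimes> fscale c x" using Suc by simp
  also have "\<dots> = fscale (c ^ Suc n) (x [^] Suc n)"
    using Suc by (simp add: mult_fscale_right mult_fscale_left V.scale_scale mult.commute)
  finally show ?case .
qed

text \<open>Multiplying a sum of scaled monomials x^k y^(n-k) by x or by y shifts the
  exponents; these are the two halves of the inductive step of the binomial theorem.\<close>
lemma scaled_monomials_times_x:
  assumes x: "x \<in> carrier R" and y: "y \<in> carrier R"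
  shows "(\<Sum>k\<le>n. fscale (c k) (x [^] k \<otimes> y [^] (n - k))) \<otimes> x
       = (\<Sum>k\<le>n. fscale (c k) (x [^] Suc k \<otimes> y [^] (n - k)))"
proof -
  have "fscale (c k) (x [^] k \<otimes> y [^] (n - k)) \<otimes> x = fscale (c k) (x [^] Suc k \<otimes> y [^] (n - k))"
    for k
  proof -
    have "x [^] k \<otimes> y [^] (n - k) \<otimes> x = x [^] Suc k \<otimes> y [^] (n - k)"
      using x y by (simp add: m_assoc m_comm[of _ x] nat_pow_Suc2)
    thus ?thesis using x y mult_fscale_left[of "x [^] k \<otimes> y [^] (n - k)" x] by simp
  qed
  thus ?thesis using x y by (simp add: mult_sum_left)
qed

lemma scaled_monomials_times_y:
  assumes x: "x \<in> carrier R" and y: "y \<in> carrier R"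
  shows "(\<Sum>k\<le>n. fscale (c k) (x [^] k \<otimes> y [^] (n - k))) \<otimes> y
       = (\<Sum>k\<le>n. fscale (c k) (x [^] k \<otimes> y [^] (Suc n - k)))"
proof -
  have "fscale (c k) (x [^] k \<otimes> y [^] (n - k)) \<otimes> y = fscale (c k) (x [^] k \<otimes> y [^] (Suc n - k))"
    if "k \<le> n" for k
    using x y that by (simp add: mult_fscale_left m_assoc Suc_diff_le)
  thus ?thesis using x y by (simp add: mult_sum_left)
qed

lemma binomial_R:
  assumes x: "x \<in> carrier R" and y: "y \<in> carrier R"
  shows "(x + y) [^] (n::nat) = (\<Sum>k\<le>n. fscale (of_nat (n choose k)) (x [^] k \<otimes> y [^] (n - k)))"
proof (induction n)
  case 0 thus ?case using x y by (simp add: V.scale_one)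
next
  case (Suc n)
  define T where "T = (\<Sum>k\<le>n. fscale (of_nat (n choose k)) (x [^] k \<otimes> y [^] (n - k)))"
  have "T \<in> carrier R" unfolding T_def using x y by (intro sum_closed_R) auto
  hence "(x + y) [^] Suc n = T \<otimes> x + T \<otimes> y"
    using Suc x y by (simp add: T_def r_distr del: add_R_eq flip: add_R_eq)
  also have "T \<otimes> y = (\<Sum>k\<le>n. fscale (of_nat (n choose k)) (x [^] k \<otimes> y [^] (Suc n - k)))"
    unfolding T_def by (rule scaled_monomials_times_y[OF x y])
  also have "\<dots> = y [^] Suc n
      + (\<Sum>k<n. fscale (of_nat (n choose Suc k)) (x [^] Suc k \<otimes> y [^] (n - k)))"
    using x y by (simp add: sum.atMost_shift lessThan_Suc_atMost V.scale_one)
  also have "(\<Sum>k<n. fscale (of_nat (n choose Suc k)) (x [^] Suc k \<otimes> y [^] (n - k)))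
      = (\<Sum>k\<le>n. fscale (of_nat (n choose Suc k)) (x [^] Suc k \<otimes> y [^] (n - k)))"
    by (simp add: lessThan_Suc_atMost[symmetric] V.scale_zero_left binomial_eq_0)
  also have "T \<otimes> x + (y [^] Suc n
      + (\<Sum>k\<le>n. fscale (of_nat (n choose Suc k)) (x [^] Suc k \<otimes> y [^] (n - k))))
    = y [^] Suc n + (\<Sum>k\<le>n. fscale (of_nat (Suc n choose Suc k)) (x [^] Suc k \<otimes> y [^] (n - k)))"
    unfolding T_def scaled_monomials_times_x[OF x y]
    by (simp add: ac_simps sum.distrib[symmetric] V.scale_left_distrib)
  also have "\<dots> = (\<Sum>k\<le>Suc n. fscale (of_nat (Suc n choose k)) (x [^] k \<otimes> y [^] (Suc n - k)))"
    using x y by (simp add: sum.atMost_Suc_shift V.scale_one del: sum.atMost_Suc)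
  finally show ?case .
qed

text \<open>The Frobenius map x |-> x^p is additive: the inner binomial coefficients
  vanish in characteristic p.  Iterating, so is the q^i-th power map.\<close>
lemma frobenius_add_char:
  assumes x: "x \<in> carrier R" and y: "y \<in> carrier R"
  shows "(x + y) [^] CHAR('a) = x [^] CHAR('a) + y [^] CHAR('a)"
proof -
  define p where "p = CHAR('a)"
  have pp: "prime p" unfolding p_def by (rule finite_field_prime_char)
  hence p0: "p > 0" by (simp add: prime_gt_0_nat)
  have "(x + y) [^] p = (\<Sum>k\<le>p. fscale (of_nat (p choose k)) (x [^] k \<otimes> y [^] (p - k)))"
    using binomial_R[OF x y] .
  also have "\<dots> = (\<Sum>k\<in>{0,p}. fscale (of_nat (p choose k)) (x [^] k \<otimes> y [^] (p - k)))"
  proof (intro sum.mono_neutral_right ballI)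
    fix k assume "k \<in> {..p} - {0, p}"
    hence k: "k > 0" "k < p" by auto
    have "p dvd (p choose k)" using dvd_choose_prime[OF k(2) _ _ pp] k p0 by simp
    hence "of_nat (p choose k) = (0 :: 'a)"
      unfolding p_def using of_nat_eq_0_iff_char_dvd by blast
    thus "fscale (of_nat (p choose k)) (x [^] k \<otimes> y [^] (p - k)) = 0"
      by (simp add: V.scale_zero_left)
  qed auto
  also have "\<dots> = x [^] p + y [^] p" using p0 x y by (simp add: V.scale_one add.commute)
  finally show ?thesis unfolding p_def .
qed

lemma frobenius_add_char_power:
  assumes x: "x \<in> carrier R" and y: "y \<in> carrier R"
  shows "(x + y) [^] (CHAR('a) ^ e) = x [^] (CHAR('a) ^ e) + y [^] (CHAR('a) ^ e)"
proof (induction e)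
  case (Suc e)
  have "(x + y) [^] (CHAR('a) ^ Suc e) = ((x + y) [^] (CHAR('a) ^ e)) [^] CHAR('a)"
    using x y by (simp add: nat_pow_pow mult.commute)
  also have "\<dots> = (x [^] (CHAR('a) ^ e)) [^] CHAR('a) + (y [^] (CHAR('a) ^ e)) [^] CHAR('a)"
    using Suc x y by (simp add: frobenius_add_char)
  finally show ?case using x y by (simp add: nat_pow_pow mult.commute)
qed (use x y in simp)

lemma frobenius_add:
  assumes x: "x \<in> carrier R" and y: "y \<in> carrier R"
  shows "(x + y) [^] (card (UNIV::'a set) ^ i)
    = x [^] (card (UNIV::'a set) ^ i) + y [^] (card (UNIV::'a set) ^ i)"
proof -
  obtain e where e: "card (UNIV :: 'a set) = CHAR('a) ^ e"
    using finite_field_card_char_power by blast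
  show ?thesis unfolding e power_mult[symmetric] by (rule frobenius_add_char_power[OF x y])
qed

text \<open>The q^i-th power map is also F_q-homogeneous, since c^q = c for scalars.\<close>
lemma frobenius_scale:
  assumes x: "x \<in> carrier R"
  shows "(fscale c x) [^] (card (UNIV::'a set) ^ i) = fscale c (x [^] (card (UNIV::'a set) ^ i))"
  using x by (simp add: pow_fscale finite_field_power_card_power)

lemma linpoly_closed: "(\<And>i. i < k \<Longrightarrow> f i \<in> carrier R) \<Longrightarrow> x \<in> carrier R \<Longrightarrow> linpoly R k f x \<in> carrier R"
  unfolding linpoly_def by (intro sum_closed_R) auto

lemma linpoly_add:
  assumes f: "\<And>i. i < k \<Longrightarrow> f i \<in> carrier R" and x: "x \<in> carrier R" and y: "y \<in> carrier R"
  shows "linpoly R k f (x + y) = linpoly R k f x + linpoly R k f y"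
  unfolding linpoly_def using f x y
  by (simp add: frobenius_add r_distr[simplified add_R_eq] sum.distrib flip: sum.distrib)

lemma linpoly_scale:
  assumes f: "\<And>i. i < k \<Longrightarrow> f i \<in> carrier R" and x: "x \<in> carrier R"
  shows "linpoly R k f (fscale c x) = fscale c (linpoly R k f x)"
  unfolding linpoly_def using f x
  by (simp add: frobenius_scale mult_fscale_right V.scale_sum_right)

text \<open>To count the roots of a linearized polynomial we view it as an element of
  the polynomial ring over R.\<close>
interpretation UPD: UP_domain R "UP R" by unfold_locales

lemma linpoly_UP_closed: "(\<And>i. i < j \<Longrightarrow> f i \<in> carrier R) \<Longrightarrow> linpoly_UP R f j \<in> carrier (UP R)"
  by (induction j) auto

lemma linpoly_UP_coeff: "(\<And>i. i < j \<Longrightarrow> f i \<in> carrier R) \<Longrightarrow>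
   coeff (UP R) (linpoly_UP R f j) (card (UNIV :: 'a set) ^ i) = (if i < j then f i else \<zero>)"
proof (induction j)
  case 0 thus ?case by simp
next
  case (Suc j)
  have inj: "card (UNIV :: 'a set) ^ i = card (UNIV :: 'a set) ^ j \<longleftrightarrow> i = j"
    using card_UNIV_ge_2[where 'a='a] by (simp add: power_inject_exp)
  show ?case using Suc linpoly_UP_closed[of j f] inj by (auto simp: less_Suc_eq)
qed

lemma linpoly_UP_deg: "(\<And>i. i < j \<Longrightarrow> f i \<in> carrier R) \<Longrightarrow>
   deg R (linpoly_UP R f j) \<le> card (UNIV :: 'a set) ^ (j - 1)"
proof (induction j)
  case 0 thus ?case by simp
next
  case (Suc j)
  have "deg R (linpoly_UP R f (Suc j))
      \<le> max (deg R (linpoly_UP R f j)) (deg R (monom (UP R) (f j) (card (UNIV::'a set) ^ j)))"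
    using Suc linpoly_UP_closed[of j f] by simp
  also have "\<dots> \<le> max (card (UNIV :: 'a set) ^ (j - 1)) (card (UNIV::'a set) ^ j)"
    using Suc by (intro max.mono UPD.deg_monom_le) auto
  also have "\<dots> = card (UNIV::'a set) ^ j"
    using card_UNIV_ge_2[where 'a='a] by (intro max_absorb2 power_increasing) auto
  finally show ?case by simp
qed

lemma linpoly_UP_eval: "(\<And>i. i < j \<Longrightarrow> f i \<in> carrier R) \<Longrightarrow> x \<in> carrier R \<Longrightarrow>
   eval R R id x (linpoly_UP R f j) = linpoly R j f x"
proof (induction j)
  case 0
  have "eval R R id x (monom (UP R) \<zero> 0) = \<zero> \<otimes> x [^] (0::nat)"
    using 0 by (intro UPD.evalRR_monom) auto
  thus ?case using 0 by (simp add: linpoly_def id_def)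
next
  case (Suc j)
  thus ?case using linpoly_UP_closed[of j f]
      UPD.evalRR_add[of "linpoly_UP R f j" "monom (UP R) (f j) (card (UNIV::'a set) ^ j)" x]
      UPD.evalRR_monom[of "f j" x "card (UNIV::'a set) ^ j"]
    by (simp add: linpoly_def id_def)
qed

text \<open>Two linearized polynomials with distinct coefficient vectors agree on at
  most q^(k-1) points: their difference is a nonzero polynomial of that degree.\<close>
lemma linpoly_roots:
  assumes f: "\<And>i. i < k \<Longrightarrow> f i \<in> carrier R" and g: "\<And>i. i < k \<Longrightarrow> g i \<in> carrier R"
    and i0: "i0 < k" "f i0 \<noteq> g i0"
  shows "finite {x \<in> carrier R. linpoly R k f x = linpoly R k g x} \<and>
         card {x \<in> carrier R. linpoly R k f x = linpoly R k g x} \<le> card (UNIV :: 'a set) ^ (k - 1)"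
proof -
  define d where "d = linpoly_UP R f k \<ominus>\<^bsub>UP R\<^esub> linpoly_UP R g k"
  have pf: "linpoly_UP R f k \<in> carrier (UP R)" using f by (rule linpoly_UP_closed)
  have pg: "linpoly_UP R g k \<in> carrier (UP R)" using g by (rule linpoly_UP_closed)
  have dc: "d \<in> carrier (UP R)" unfolding d_def using pf pg by simp
  have c: "coeff (UP R) d (card (UNIV :: 'a set) ^ i0) = f i0 \<ominus> g i0"
    unfolding d_def using pf pg linpoly_UP_coeff[of k f i0] linpoly_UP_coeff[of k g i0] f g i0
    by simp
  have "f i0 \<ominus> g i0 \<noteq> \<zero>" using i0 f g r_right_minus_eq[of "f i0" "g i0"] by simp
  hence dnz: "d \<noteq> \<zero>\<^bsub>UP R\<^esub>" using c by auto
  have "deg R d \<le> max (deg R (linpoly_UP R f k)) (deg R (\<ominus>\<^bsub>UP R\<^esub> linpoly_UP R g k))"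
    unfolding d_def a_minus_def
    using pf pg UPD.deg_add[of "linpoly_UP R f k" "\<ominus>\<^bsub>UP R\<^esub> linpoly_UP R g k"] by simp
  also have "\<dots> \<le> card (UNIV :: 'a set) ^ (k - 1)"
    using linpoly_UP_deg[of k f] linpoly_UP_deg[of k g] f g pg by simp
  finally have dd: "deg R d \<le> card (UNIV :: 'a set) ^ (k - 1)" .
  have fin: "finite (carrier R)" by (simp add: carrier_Vsp finite_Vsp)
  have eq: "{x \<in> carrier R. linpoly R k f x = linpoly R k g x}
      = {a \<in> carrier R. eval R R id a d = \<zero>}"
  proof (intro Collect_cong conj_cong refl)
    fix x assume x: "x \<in> carrier R"
    have "eval R R id x d = linpoly R k f x \<ominus> linpoly R k g x"
      unfolding d_def using x pf pg f g by (simp add: UPD.evalRR_simps linpoly_UP_eval)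
    thus "(linpoly R k f x = linpoly R k g x) = (eval R R id x d = \<zero>)"
      using x f g linpoly_closed[of k f x] linpoly_closed[of k g x]
        r_right_minus_eq[of "linpoly R k f x" "linpoly R k g x"] by simp
  qed
  show ?thesis unfolding eq using UPD.roots_bound[OF dc dnz fin] dd by simp
qed

end


section \<open>Graphs and blocks in the space A x F\<close>

definition Wsp :: "(nat \<Rightarrow> 'a::field) set \<Rightarrow> nat \<Rightarrow> ((nat \<Rightarrow> 'a) \<times> (nat \<Rightarrow> 'a)) set" where
  "Wsp A m = {(a, b). a \<in> fspan A \<and> b \<in> Vsp m}"

lemma Wsp_subspace: "P.subspace (Wsp A m)"
  using V.span_zero V.span_add V.span_scale V.subspace_0[OF Vsp_subspace]
    V.subspace_add[OF Vsp_subspace] V.subspace_scale[OF Vsp_subspace]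
  by (auto simp: P.subspace_def Wsp_def pscale_def zero_prod_def)

lemma graph_subspace:
  fixes L :: "(nat \<Rightarrow> 'a::field) \<Rightarrow> (nat \<Rightarrow> 'a)"
  assumes L_add: "\<And>x y. x \<in> Vsp m \<Longrightarrow> y \<in> Vsp m \<Longrightarrow> L (x + y) = L x + L y"
    and L_scale: "\<And>c x. x \<in> Vsp m \<Longrightarrow> L (fscale c x) = fscale c (L x)"
    and X: "fsubspace X" "X \<subseteq> Vsp m"
  shows "P.subspace {(a, L a) | a. a \<in> X}"
proof -
  have "L 0 = 0"
    using L_scale[of 0 0] V.subspace_0[OF Vsp_subspace, of m] by (simp add: V.scale_zero_left)
  thus ?thesis
    using X L_add L_scale V.subspace_0[OF X(1)] V.subspace_add[OF X(1)] V.subspace_scale[OF X(1)]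
    unfolding P.subspace_def
    by (auto simp: pscale_def zero_prod_def subset_iff intro!: exI[of _ "x + y" for x y]
        exI[of _ "fscale c x" for c x] exI[of _ 0])
qed

lemma graph_span:
  fixes L :: "(nat \<Rightarrow> 'a::field) \<Rightarrow> (nat \<Rightarrow> 'a)"
  assumes L_add: "\<And>x y. x \<in> Vsp m \<Longrightarrow> y \<in> Vsp m \<Longrightarrow> L (x + y) = L x + L y"
    and L_scale: "\<And>c x. x \<in> Vsp m \<Longrightarrow> L (fscale c x) = fscale c (L x)"
    and S: "S \<subseteq> Vsp m"
  shows "P.span ((\<lambda>s. (s, L s)) ` S) = {(a, L a) | a. a \<in> fspan S}"
proof
  show "P.span ((\<lambda>s. (s, L s)) ` S) \<subseteq> {(a, L a) |a. a \<in> fspan S}"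
    by (rule P.span_minimal[OF _ graph_subspace[OF L_add L_scale V.subspace_span fspan_Vsp[OF S]]])
      (auto intro: V.span_base)
next
  define X where "X = {a \<in> Vsp m. (a, L a) \<in> P.span ((\<lambda>s. (s, L s)) ` S)}"
  have "L 0 = 0"
    using L_scale[of 0 0] V.subspace_0[OF Vsp_subspace, of m] by (simp add: V.scale_zero_left)
  hence "fsubspace X"
    using P.span_zero P.span_add P.span_scale L_add L_scale V.subspace_0[OF Vsp_subspace]
      V.subspace_add[OF Vsp_subspace] V.subspace_scale[OF Vsp_subspace]
    unfolding V.subspace_def X_def by (auto simp: pscale_def zero_prod_def simp flip: plus_prod_def)
  moreover have "S \<subseteq> X" unfolding X_def using S by (auto intro: P.span_base)
  ultimately have "fspan S \<subseteq> X" using V.span_minimal by blast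
  thus "{(a, L a) |a. a \<in> fspan S} \<subseteq> P.span ((\<lambda>s. (s, L s)) ` S)"
    unfolding X_def by blast
qed

lemma graph_independent:
  fixes L :: "(nat \<Rightarrow> 'a::field) \<Rightarrow> (nat \<Rightarrow> 'a)"
  assumes "findependent S"
  shows "P.independent ((\<lambda>s. (s, L s)) ` S)"
proof -
  have "inj_on fst ((\<lambda>s. (s, L s)) ` S)" by (auto simp: inj_on_def)
  moreover have "fst ` ((\<lambda>s. (s, L s)) ` S) = S" by force
  ultimately show ?thesis
    using VP.independent_if_independent_image[OF linear_fst] assms by metis
qed

definition block_gens :: "(nat \<Rightarrow> nat \<Rightarrow> 'a::zero) \<Rightarrow> nat set \<Rightarrow> (nat \<Rightarrow> nat \<Rightarrow> 'a) \<Rightarrow> nat set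
     \<Rightarrow> ((nat \<Rightarrow> 'a) \<times> (nat \<Rightarrow> 'a)) set" where
  "block_gens \<alpha> J e I = (\<lambda>j. (\<alpha> j, 0)) ` J \<union> (\<lambda>j. (0, e j)) ` I"

lemma Vblock_eq_block_gens:
  "Vblock \<alpha> h l e \<sigma> = block_gens \<alpha> {(\<sigma> - 1) * h + 1 .. \<sigma> * h} (e \<sigma>) {1..l}"
  unfolding Vblock_def block_gens_def by simp

lemma block_fst_span: "x \<in> P.span (block_gens \<alpha> J e I) \<Longrightarrow> fst x \<in> fspan (\<alpha> ` J)"
proof -
  assume "x \<in> P.span (block_gens \<alpha> J e I)"
  hence "fst x \<in> fspan (fst ` block_gens \<alpha> J e I)" by (rule fst_in_span)
  also have "\<dots> \<subseteq> fspan (insert 0 (\<alpha> ` J))" by (rule V.span_mono) (auto simp: block_gens_def)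
  finally show ?thesis by (simp only: V.span_insert_0)
qed

lemma block_snd_span: "x \<in> P.span (block_gens \<alpha> J e I) \<Longrightarrow> snd x \<in> fspan (e ` I)"
proof -
  assume "x \<in> P.span (block_gens \<alpha> J e I)"
  hence "snd x \<in> fspan (snd ` block_gens \<alpha> J e I)" by (rule snd_in_span)
  also have "\<dots> \<subseteq> fspan (insert 0 (e ` I))" by (rule V.span_mono) (auto simp: block_gens_def)
  finally show ?thesis by (simp only: V.span_insert_0)
qed

lemma block_in_Wsp:
  assumes "\<alpha> ` J \<subseteq> fspan A" "e ` I \<subseteq> Vsp m"
  shows "P.span (block_gens \<alpha> J e I) \<subseteq> Wsp A m"
  by (rule P.span_minimal[OF _ Wsp_subspace])
    (use assms V.span_zero V.subspace_0[OF Vsp_subspace] in \<open>auto simp: Wsp_def block_gens_def\<close>)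

text \<open>A block built from independent alphas and independent vectors e has dimension
  card J + card I: its generators are independent since each half is.\<close>
lemma block_dim:
  fixes \<alpha> e :: "nat \<Rightarrow> nat \<Rightarrow> 'a::field"
  assumes J: "J \<subseteq> L" "finite J" and I: "finite I"
    and \<alpha>: "inj_on \<alpha> L" "findependent (\<alpha> ` L)" and e: "inj_on e I" "findependent (e ` I)"
  shows "P.dim (P.span (block_gens \<alpha> J e I)) = card J + card I"
proof -
  have \<alpha>_nonzero: "\<alpha> j \<noteq> 0" if "j \<in> L" for j
    using \<alpha>(2) V.dependent_zero that by (metis image_eqI)
  have indep: "P.independent (block_gens \<alpha> J e I)"
  proof
    assume "P.dependent (block_gens \<alpha> J e I)"
    then obtain x where x: "x \<in> block_gens \<alpha> J e I" "x \<in> P.span (block_gens \<alpha> J e I - {x})"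
      using P.dependent_def by blast
    show False
    proof (cases "x \<in> (\<lambda>j. (\<alpha> j, 0)) ` J")
      case True
      then obtain j where j: "j \<in> J" "x = (\<alpha> j, 0)" by blast
      have "fst ` (block_gens \<alpha> J e I - {x}) \<subseteq> insert 0 (\<alpha> ` L - {\<alpha> j})"
        using j J by (auto simp: block_gens_def)
      hence "\<alpha> j \<in> fspan (\<alpha> ` L - {\<alpha> j})"
        using fst_in_span[OF x(2)] j
          V.span_mono[of "fst ` (block_gens \<alpha> J e I - {x})" "insert 0 (\<alpha> ` L - {\<alpha> j})"]
        by auto
      thus False using \<alpha>(2) j J unfolding V.dependent_def by blast
    next
      case False
      then obtain i where i: "i \<in> I" "x = (0, e i)" using x(1) by (auto simp: block_gens_def)
      have "snd ` (block_gens \<alpha> J e I - {x}) \<subseteq> insert 0 (e ` I - {e i})"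
        using i by (auto simp: block_gens_def)
      hence "e i \<in> fspan (e ` I - {e i})"
        using snd_in_span[OF x(2)] i
          V.span_mono[of "snd ` (block_gens \<alpha> J e I - {x})" "insert 0 (e ` I - {e i})"]
        by auto
      thus False using e(2) i unfolding V.dependent_def by blast
    qed
  qed
  moreover have "(\<lambda>j. (\<alpha> j, 0)) ` J \<inter> (\<lambda>j. (0, e j)) ` I = {}"
    using \<alpha>_nonzero J by auto
  moreover have "card ((\<lambda>j. (\<alpha> j, 0::nat \<Rightarrow> 'a)) ` J) = card J"
    using \<alpha>(1) J by (intro card_image) (auto simp: inj_on_def)
  moreover have "card ((\<lambda>j. (0::nat \<Rightarrow> 'a, e j)) ` I) = card I"
    using e(1) by (intro card_image) (auto simp: inj_on_def)
  ultimately have "card (block_gens \<alpha> J e I) = card J + card I"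
    using card_Un_disjoint[of "(\<lambda>j. (\<alpha> j, 0)) ` J" "(\<lambda>j. (0, e j)) ` I"] J(2) I
    unfolding block_gens_def by simp
  thus ?thesis using P.dim_span_eq_card_independent[OF indep] by simp
qed

text \<open>Blocks over disjoint sets of alphas meet only in vectors (0, v) with v in both
  second halves, so their intersection is no larger than that of the second halves.\<close>
lemma block_block_int:
  fixes \<alpha> e1 e2 :: "nat \<Rightarrow> nat \<Rightarrow> 'a::field"
  assumes \<alpha>: "inj_on \<alpha> L" "findependent (\<alpha> ` L)"
    and J: "J1 \<subseteq> L" "J2 \<subseteq> L" "J1 \<inter> J2 = {}" and I1: "finite I1"
  shows "P.dim (P.span (block_gens \<alpha> J1 e1 I1) \<inter> P.span (block_gens \<alpha> J2 e2 I2))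
    \<le> fdim (fspan (e1 ` I1) \<inter> fspan (e2 ` I2))"
proof -
  define U where "U = fspan (e1 ` I1) \<inter> fspan (e2 ` I2)"
  obtain B where B: "B \<subseteq> U" "findependent B" "U \<subseteq> fspan B" "card B = fdim U"
    using V.basis_exists by blast
  have finite_B: "finite B"
    using V.independent_span_bound[OF _ B(2), of "e1 ` I1"] I1 B(1) U_def by blast
  have disj: "\<alpha> ` J1 \<inter> \<alpha> ` J2 = {}" using J \<alpha>(1) unfolding inj_on_def by blast
  have "P.span (block_gens \<alpha> J1 e1 I1) \<inter> P.span (block_gens \<alpha> J2 e2 I2) \<subseteq> P.span ((\<lambda>v. (0, v)) ` B)"
  proof
    fix x assume x: "x \<in> P.span (block_gens \<alpha> J1 e1 I1) \<inter> P.span (block_gens \<alpha> J2 e2 I2)"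
    have "fst x = 0"
      using V.span_Int_disjoint[OF \<alpha>(2) _ _ disj] J block_fst_span[of x \<alpha> J1 e1 I1]
        block_fst_span[of x \<alpha> J2 e2 I2] x
      by (meson IntD1 IntD2 image_mono)
    moreover have "snd x \<in> fspan B"
      using block_snd_span[of x \<alpha> J1 e1 I1] block_snd_span[of x \<alpha> J2 e2 I2] x B(3) U_def by blast
    hence "(0, snd x) \<in> P.span ((\<lambda>v. (0, v)) ` B)"
      using PV.linear_span_image[OF linear_Pair_zero, of B] by blast
    ultimately show "x \<in> P.span ((\<lambda>v. (0, v)) ` B)" by (metis prod.collapse)
  qed
  hence "P.dim (P.span (block_gens \<alpha> J1 e1 I1) \<inter> P.span (block_gens \<alpha> J2 e2 I2))
      \<le> card ((\<lambda>v. (0::nat \<Rightarrow> 'a, v)) ` B)"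
    using finite_B by (intro P.dim_le_card) auto
  also have "\<dots> \<le> card B" using card_image_le[OF finite_B] .
  finally show ?thesis using B(4) U_def by simp
qed


section \<open>The Koetter-Kschischang code\<close>

context vsp_field
begin

lemma Esp_eq:
  assumes f: "\<forall>i<k. f i \<in> carrier R" and \<alpha>: "\<alpha> ` {1..l} \<subseteq> Vsp m"
  shows "Esp R \<alpha> l k f = {(a, linpoly R k f a) | a. a \<in> fspan (\<alpha> ` {1..l})}"
proof -
  have "Esp R \<alpha> l k f = P.span ((\<lambda>s. (s, linpoly R k f s)) ` (\<alpha> ` {1..l}))"
    unfolding Esp_def by (simp add: image_image)
  also have "\<dots> = {(a, linpoly R k f a) | a. a \<in> fspan (\<alpha> ` {1..l})}"
    by (rule graph_span) (use f \<alpha> in \<open>auto simp: carrier_Vsp intro: linpoly_add linpoly_scale\<close>)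
  finally show ?thesis .
qed

text \<open>The graph points over l independent alphas are independent, so dim E(f) = l.\<close>
lemma Esp_dim:
  assumes \<alpha>: "inj_on \<alpha> {1..l}" "findependent (\<alpha> ` {1..l})"
  shows "P.dim (Esp R \<alpha> l k f) = l"
proof -
  let ?graph = "(\<lambda>s. (s, linpoly R k f s)) ` (\<alpha> ` {1..l})"
  have "Esp R \<alpha> l k f = P.span ?graph" unfolding Esp_def by (simp add: image_image)
  hence "P.dim (Esp R \<alpha> l k f) = card ?graph"
    using P.dim_span_eq_card_independent[OF graph_independent[OF \<alpha>(2)]] by simp
  also have "\<dots> = card (\<alpha> ` {1..l})" by (rule card_image) (auto simp: inj_on_def)
  also have "\<dots> = l" using \<alpha>(1) by (simp add: card_image)
  finally show ?thesis .
qed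

lemma Esp_in_Wsp:
  assumes f: "\<forall>i<k. f i \<in> carrier R" and \<alpha>: "\<alpha> ` {1..l} \<subseteq> Vsp m"
  shows "Esp R \<alpha> l k f \<subseteq> Wsp (\<alpha> ` {1..l}) m"
  unfolding Esp_eq[OF f \<alpha>] Wsp_def using fspan_Vsp[OF \<alpha>] linpoly_closed f
  by (auto simp: carrier_Vsp)

text \<open>Two distinct E(f), E(g) meet in the graph over the common roots of the
  linearized polynomials f - g, so they share at most q^(k-1) vectors.\<close>
lemma Esp_Int_card:
  assumes f: "\<forall>i<k. f i \<in> carrier R" and g: "\<forall>i<k. g i \<in> carrier R"
    and \<alpha>: "\<alpha> ` {1..l} \<subseteq> Vsp m" and ne: "Esp R \<alpha> l k f \<noteq> Esp R \<alpha> l k g"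
  shows "finite (Esp R \<alpha> l k f \<inter> Esp R \<alpha> l k g)"
    "card (Esp R \<alpha> l k f \<inter> Esp R \<alpha> l k g) \<le> card (UNIV :: 'a set) ^ (k - 1)"
proof -
  define X where "X = Esp R \<alpha> l k f \<inter> Esp R \<alpha> l k g"
  define roots where "roots = {x \<in> carrier R. linpoly R k f x = linpoly R k g x}"
  obtain i0 where i0: "i0 < k" "f i0 \<noteq> g i0"
  proof (rule ccontr)
    assume "\<not> thesis"
    hence "\<forall>i<k. f i = g i" using that by blast
    hence "linpoly R k f = linpoly R k g" unfolding linpoly_def by (intro ext sum.cong) auto
    thus False using ne unfolding Esp_def by simp
  qed
  have roots: "finite roots" "card roots \<le> card (UNIV :: 'a set) ^ (k - 1)"
    using linpoly_roots[of k f g i0] f g i0 unfolding roots_def by auto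
  have "X \<subseteq> {(a, linpoly R k f a) | a. a \<in> roots}"
    unfolding X_def Esp_eq[OF f \<alpha>] Esp_eq[OF g \<alpha>] roots_def
    using fspan_Vsp[OF \<alpha>] by (auto simp: carrier_Vsp)
  also have "\<dots> = (\<lambda>a. (a, linpoly R k f a)) ` roots" by blast
  finally have sub: "X \<subseteq> (\<lambda>a. (a, linpoly R k f a)) ` roots" .
  show "finite (Esp R \<alpha> l k f \<inter> Esp R \<alpha> l k g)"
    using finite_subset[OF sub finite_imageI[OF roots(1)]] unfolding X_def .
  have "card X \<le> card roots"
    using le_trans[OF card_mono[OF finite_imageI[OF roots(1)] sub] card_image_le[OF roots(1)]] .
  thus "card (Esp R \<alpha> l k f \<inter> Esp R \<alpha> l k g) \<le> card (UNIV :: 'a set) ^ (k - 1)"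
    using roots(2) unfolding X_def by linarith
qed

text \<open>Hence, counting vectors, E(f) \<inter> E(g) has dimension at most k - 1.\<close>
lemma Esp_Int_dim:
  assumes f: "\<forall>i<k. f i \<in> carrier R" and g: "\<forall>i<k. g i \<in> carrier R"
    and \<alpha>: "\<alpha> ` {1..l} \<subseteq> Vsp m" and ne: "Esp R \<alpha> l k f \<noteq> Esp R \<alpha> l k g"
  shows "P.dim (Esp R \<alpha> l k f \<inter> Esp R \<alpha> l k g) \<le> k - 1"
proof -
  have "P.subspace (Esp R \<alpha> l k f \<inter> Esp R \<alpha> l k g)"
    unfolding Esp_def by (intro P.subspace_inter P.subspace_span)
  hence "card (UNIV :: 'a set) ^ P.dim (Esp R \<alpha> l k f \<inter> Esp R \<alpha> l k g)
      \<le> card (UNIV :: 'a set) ^ (k - 1)"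
    using P.card_subspace_ge Esp_Int_card[OF f g \<alpha> ne] le_trans by blast
  thus ?thesis using card_UNIV_ge_2[where 'a='a] by (simp add: power_le_imp_le_exp)
qed

text \<open>E(f) meets a block built on the alphas indexed by J in a subspace projecting
  injectively into span(alpha ` J), hence of dimension at most card J.\<close>
lemma Esp_block_int:
  assumes f: "\<forall>i<k. f i \<in> carrier R" and \<alpha>: "\<alpha> ` {1..l} \<subseteq> Vsp m"
    and J: "J \<subseteq> {1..l}" "finite J"
  shows "P.dim (Esp R \<alpha> l k f \<inter> P.span (block_gens \<alpha> J e I)) \<le> card J"
proof -
  define L where "L = linpoly R k f"
  have "P.span ((\<lambda>s. (s, L s)) ` (\<alpha> ` J)) = {(a, L a) | a. a \<in> fspan (\<alpha> ` J)}"
    unfolding L_def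
    by (rule graph_span) (use f \<alpha> J in \<open>auto simp: carrier_Vsp intro: linpoly_add linpoly_scale\<close>)
  moreover have "x \<in> {(a, L a) | a. a \<in> fspan (\<alpha> ` J)}"
    if "x \<in> Esp R \<alpha> l k f \<inter> P.span (block_gens \<alpha> J e I)" for x
    using that block_fst_span[of x \<alpha> J e I] unfolding Esp_eq[OF f \<alpha>] L_def by auto
  ultimately have "P.dim (Esp R \<alpha> l k f \<inter> P.span (block_gens \<alpha> J e I))
      \<le> card ((\<lambda>s. (s, L s)) ` (\<alpha> ` J))"
    using J(2) by (intro P.dim_le_card) auto
  also have "\<dots> \<le> card J" using J(2) by (metis card_image_le finite_imageI le_trans)
  finally show ?thesis .
qed

end

definition Esp_family :: "(nat \<Rightarrow> 'a::{field,finite}) ring \<Rightarrow> (nat \<Rightarrow> nat \<Rightarrow> 'a) \<Rightarrow> nat \<Rightarrow> nat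
     \<Rightarrow> ((nat \<Rightarrow> 'a) \<times> (nat \<Rightarrow> 'a)) set set" where
  "Esp_family R \<alpha> l k = {Esp R \<alpha> l k f | f. \<forall>i<k. f i \<in> carrier R}"

lemma KKcode_eq: "KKcode R \<alpha> l k \<phi> = (`) \<phi> ` Esp_family R \<alpha> l k"
  unfolding KKcode_def Esp_family_def by blast

lemma (in vsp_field) Esp_family_code:
  assumes \<alpha>: "\<alpha> ` {1..l} \<subseteq> Vsp m" "inj_on \<alpha> {1..l}" "findependent (\<alpha> ` {1..l})"
  shows "P.dim_code (Esp_family R \<alpha> l k) l k" "\<forall>X\<in>Esp_family R \<alpha> l k. X \<subseteq> Wsp (\<alpha> ` {1..l}) m"
proof -
  have "P.subspace (Esp R \<alpha> l k f)" for f unfolding Esp_def by (rule P.subspace_span)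
  thus "P.dim_code (Esp_family R \<alpha> l k) l k"
    using Esp_dim[OF \<alpha>(2,3)] Esp_Int_dim[OF _ _ \<alpha>(1)]
    unfolding P.dim_code_def Esp_family_def by blast
  show "\<forall>X\<in>Esp_family R \<alpha> l k. X \<subseteq> Wsp (\<alpha> ` {1..l}) m"
    using Esp_in_Wsp[OF _ \<alpha>(1)] unfolding Esp_family_def by auto
qed


section \<open>The recursive construction\<close>

lemma kk_setup_vsp_field: "kk_setup m n l R \<alpha> \<phi> \<Longrightarrow> vsp_field R m"
  unfolding kk_setup_def vsp_field_def vsp_field_axioms_def by auto

lemma kk_setup_alpha:
  assumes "kk_setup m n l R \<alpha> \<phi>"
  shows "\<alpha> ` {1..l} \<subseteq> Vsp m" "inj_on \<alpha> {1..l}" "findependent (\<alpha> ` {1..l})"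
  using assms unfolding kk_setup_def by auto

lemma kk_setup_transport:
  assumes kk: "kk_setup m n l R \<alpha> \<phi>"
    and F: "P.dim_code F l k" "\<forall>X\<in>F. X \<subseteq> Wsp (\<alpha> ` {1..l}) m"
  shows "V.dim_code ((`) \<phi> ` F) l k \<and> (\<forall>U\<in>(`) \<phi> ` F. U \<subseteq> Vsp n)"
proof -
  have "Vector_Spaces.linear pscale fscale \<phi>" "bij_betw \<phi> (Wsp (\<alpha> ` {1..l}) m) (Vsp n)"
    using kk unfolding kk_setup_def Wsp_def by auto
  thus ?thesis using VP.dim_code_image F unfolding bij_betw_def by blast
qed

lemma block_interval:
  fixes h l \<sigma> :: nat
  assumes "\<sigma> \<ge> 1" "\<sigma> * h \<le> l"
  shows "{(\<sigma> - 1) * h + 1 .. \<sigma> * h} \<subseteq> {1..l}" "card {(\<sigma> - 1) * h + 1 .. \<sigma> * h} = h"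
  using assms by (auto simp: diff_mult_distrib)

lemma block_interval_disjoint:
  fixes h \<sigma> \<tau> :: nat
  assumes "\<sigma> \<noteq> \<tau>"
  shows "{(\<sigma> - 1) * h + 1 .. \<sigma> * h} \<inter> {(\<tau> - 1) * h + 1 .. \<tau> * h} = {}"
proof -
  have before: "s * h \<le> (r - 1) * h" if "s < r" for s r :: nat
    using that by (intro mult_le_mono1) simp
  have False if "x \<in> {(\<sigma> - 1) * h + 1 .. \<sigma> * h}" "x \<in> {(\<tau> - 1) * h + 1 .. \<tau> * h}" for x
  proof (cases "\<sigma> < \<tau>")
    case True
    have "x \<le> \<sigma> * h" "(\<tau> - 1) * h + 1 \<le> x" using that by auto
    thus False using before[OF True] by linarith
  next
    case False
    hence "\<tau> < \<sigma>" using assms by simp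
    have "x \<le> \<tau> * h" "(\<sigma> - 1) * h + 1 \<le> x" using that by auto
    thus False using before[OF \<open>\<tau> < \<sigma>\<close>] by linarith
  qed
  thus ?thesis by blast
qed

lemma Vblock_dim:
  assumes \<alpha>: "inj_on \<alpha> {1..l}" "findependent (\<alpha> ` {1..l})" and \<sigma>: "\<sigma> \<ge> 1" "\<sigma> * h \<le> l"
    and e: "inj_on (e \<sigma>) {1..l'}" "findependent (e \<sigma> ` {1..l'})"
  shows "P.dim (pspan (Vblock \<alpha> h l' e \<sigma>)) = h + l'"
proof -
  have "P.dim (pspan (Vblock \<alpha> h l' e \<sigma>)) = card {(\<sigma> - 1) * h + 1 .. \<sigma> * h} + card {1..l'}"
    unfolding Vblock_eq_block_gens by (rule block_dim[OF block_interval(1)[OF \<sigma>] _ _ \<alpha> e]) auto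
  thus ?thesis unfolding block_interval(2)[OF \<sigma>] by simp
qed

text \<open>Two distinct blocks use disjoint runs of alphas, so they meet in dimension at
  most that of the intersection of the spans of their second halves.\<close>
lemma Vblock_Int_dim:
  assumes \<alpha>: "inj_on \<alpha> {1..l}" "findependent (\<alpha> ` {1..l})" and "\<sigma> \<noteq> \<tau>"
    and \<sigma>: "\<sigma> \<ge> 1" "\<sigma> * h \<le> l" and \<tau>: "\<tau> \<ge> 1" "\<tau> * h \<le> l"
  shows "P.dim (pspan (Vblock \<alpha> h l' e \<sigma>) \<inter> pspan (Vblock \<alpha> h l' e \<tau>))
    \<le> fdim (fspan (e \<sigma> ` {1..l'}) \<inter> fspan (e \<tau> ` {1..l'}))"
  unfolding Vblock_eq_block_gens
  by (rule block_block_int[OF \<alpha> block_interval(1)[OF \<sigma>] block_interval(1)[OF \<tau>]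
        block_interval_disjoint[OF \<open>\<sigma> \<noteq> \<tau>\<close>]]) simp

text \<open>The blocks V_sigma form a code: each has dimension h + (l - h) = l, and two of
  them meet inside 0 x (U_sigma \<inter> U_tau), which is small by the inner code D.\<close>
lemma block_family_code:
  fixes D :: "(nat \<Rightarrow> 'a::field) set set"
  assumes \<alpha>: "inj_on \<alpha> {1..l}" "findependent (\<alpha> ` {1..l})" and hl: "h \<le> l"
    and D: "V.dim_code D (l - h) k" "\<forall>U\<in>D. U \<subseteq> Vsp m"
    and U: "bij_betw U {1..card D} D" and t: "t \<le> card D" "\<forall>\<sigma>\<in>{1..t}. \<sigma> * h \<le> l"
    and e: "\<forall>\<sigma>\<in>{1..t}. inj_on (e \<sigma>) {1..l - h} \<and> findependent (e \<sigma> ` {1..l - h})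
                      \<and> fspan (e \<sigma> ` {1..l - h}) = U \<sigma>"
  defines "B \<equiv> {pspan (Vblock \<alpha> h (l - h) e \<sigma>) | \<sigma>. \<sigma> \<in> {1..t}}"
  shows "P.dim_code B l k" "\<forall>X\<in>B. X \<subseteq> Wsp (\<alpha> ` {1..l}) m"
proof -
  have U_in_D: "U \<sigma> \<in> D" if "\<sigma> \<in> {1..t}" for \<sigma>
    using U t(1) that unfolding bij_betw_def by auto
  have dim: "P.dim (pspan (Vblock \<alpha> h (l - h) e \<sigma>)) = l" if "\<sigma> \<in> {1..t}" for \<sigma>
    using Vblock_dim[OF \<alpha>, where \<sigma>=\<sigma> and h=h and e=e and l'="l - h"] t(2) e that hl by auto
  have meet: "P.dim (pspan (Vblock \<alpha> h (l - h) e \<sigma>) \<inter> pspan (Vblock \<alpha> h (l - h) e \<tau>)) \<le> k - 1"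
    if "\<sigma> \<in> {1..t}" "\<tau> \<in> {1..t}" "\<sigma> \<noteq> \<tau>" for \<sigma> \<tau>
  proof -
    have "U \<sigma> \<noteq> U \<tau>"
      using U t(1) that unfolding bij_betw_def inj_on_def by (meson atLeastAtMost_iff le_trans)
    hence "fdim (U \<sigma> \<inter> U \<tau>) \<le> k - 1" using D(1) U_in_D that unfolding V.dim_code_def by blast
    thus ?thesis
      using Vblock_Int_dim[OF \<alpha> that(3), where h=h and e=e and l'="l - h"] t(2) e that by auto
  qed
  show "P.dim_code B l k"
    unfolding B_def P.dim_code_def using dim meet by (auto intro: P.subspace_span)
  have "pspan (Vblock \<alpha> h (l - h) e \<sigma>) \<subseteq> Wsp (\<alpha> ` {1..l}) m" if "\<sigma> \<in> {1..t}" for \<sigma>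
    unfolding Vblock_eq_block_gens
  proof (rule block_in_Wsp)
    show "\<alpha> ` {(\<sigma> - 1) * h + 1 .. \<sigma> * h} \<subseteq> fspan (\<alpha> ` {1..l})"
      using block_interval(1)[of \<sigma> h l] t(2) that V.span_superset by fastforce
    show "e \<sigma> ` {1..l - h} \<subseteq> Vsp m"
      using V.span_superset[of "e \<sigma> ` {1..l - h}"] e U_in_D[OF that] D(2) that by blast
  qed
  thus "\<forall>X\<in>B. X \<subseteq> Wsp (\<alpha> ` {1..l}) m" unfolding B_def by blast
qed

lemma (in vsp_field) Esp_Vblock_int:
  assumes f: "\<forall>i<k. f i \<in> carrier R" and \<alpha>: "\<alpha> ` {1..l} \<subseteq> Vsp m"
    and \<sigma>: "\<sigma> \<ge> 1" "\<sigma> * h \<le> l"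
  shows "P.dim (Esp R \<alpha> l k f \<inter> pspan (Vblock \<alpha> h l' e \<sigma>)) \<le> h"
  using Esp_block_int[OF f \<alpha> block_interval(1)[OF \<sigma>]] block_interval(2)[OF \<sigma>]
  unfolding Vblock_eq_block_gens by simp

lemma block_count:
  assumes "t = (if h > 0 then min (l div h) N else N)"
  shows "t \<le> N" "\<forall>\<sigma>\<in>{1..t}. \<sigma> * h \<le> (l::nat)"
proof -
  show "t \<le> N" using assms by simp
  have "\<sigma> * h \<le> l" if "\<sigma> \<le> l div h" "h > 0" for \<sigma>
    using that by (simp add: less_eq_div_iff_mult_less_eq)
  thus "\<forall>\<sigma>\<in>{1..t}. \<sigma> * h \<le> l" using assms by (cases "h > 0") auto
qed

lemma Ccode_dim_code:
  "Ccode n l k C \<Longrightarrow> V.dim_code C l k \<and> (\<forall>U\<in>C. U \<subseteq> Vsp n)"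
proof (induction rule: Ccode.induct)
  case (base k l m h R \<alpha> \<phi>)
  interpret vsp_field R m using kk_setup_vsp_field[OF base(6)] .
  show ?case
    unfolding KKcode_eq
    using kk_setup_transport[OF base(6) Esp_family_code[OF kk_setup_alpha[OF base(6)]]] .
next
  case (recur k l m h R \<alpha> \<phi> D U t e)
  interpret vsp_field R m using kk_setup_vsp_field[OF recur(6)] .
  note \<alpha> = kk_setup_alpha[OF recur(6)]
  define B where "B = {pspan (Vblock \<alpha> h (l - h) e \<sigma>) | \<sigma>. \<sigma> \<in> {1..t}}"
  note t = block_count[OF recur(9)]
  have hl: "h \<le> l" using recur(2,4) by simp
  note D = recur.IH[THEN conjunct1] recur.IH[THEN conjunct2]
  note blocks = block_family_code[OF \<alpha>(2,3) hl D recur(8) t recur(10), folded B_def]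
  have cross: "P.dim (X \<inter> Y) \<le> k - 1"
    if X: "X \<in> Esp_family R \<alpha> l k" and Y: "Y \<in> B" for X Y
  proof -
    obtain f where f: "\<forall>i<k. f i \<in> carrier R" "X = Esp R \<alpha> l k f"
      using X unfolding Esp_family_def by blast
    obtain \<sigma> where \<sigma>: "\<sigma> \<in> {1..t}" "Y = pspan (Vblock \<alpha> h (l - h) e \<sigma>)"
      using Y unfolding B_def by blast
    have "P.dim (X \<inter> Y) \<le> h"
      unfolding f(2) \<sigma>(2) by (rule Esp_Vblock_int[OF f(1) \<alpha>(1)]) (use \<sigma> t(2) in auto)
    thus ?thesis using recur(4) by simp
  qed
  have "P.dim_code (Esp_family R \<alpha> l k \<union> B) l k"
    using P.dim_code_Un[OF Esp_family_code(1)[OF \<alpha>] blocks(1) cross] .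
  moreover have "\<forall>X\<in>Esp_family R \<alpha> l k \<union> B. X \<subseteq> Wsp (\<alpha> ` {1..l}) m"
    using Esp_family_code(2)[OF \<alpha>] blocks(2) by blast
  moreover have "KKcode R \<alpha> l k \<phi> \<union> {\<phi> ` pspan (Vblock \<alpha> h (l - h) e \<sigma>) | \<sigma>. \<sigma> \<in> {1..t}}
      = (`) \<phi> ` (Esp_family R \<alpha> l k \<union> B)"
    unfolding KKcode_eq B_def by blast
  ultimately show ?case using kk_setup_transport[OF recur(6)] by simp
qed

theorem mainTheorem2:
  fixes C :: "(nat \<Rightarrow> 'a::{field,finite}) set set"
    and l m k :: nat
  assumes "1 \<le> k" and "k \<le> l" and "l \<le> m"
    and "Ccode (l + m) l k C"
  shows "(\<forall>U\<in>C. fsubspace U \<and> U \<subseteq> Vsp (l + m) \<and> fdim U = l)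
       \<and> (\<forall>U\<in>C. \<forall>V\<in>C. U \<noteq> V \<longrightarrow> fdim (U \<inter> V) \<le> k - 1)
       \<and> (\<forall>U\<in>C. \<forall>V\<in>C. U \<noteq> V \<longrightarrow> subdist U V \<ge> 2 * (int l - int k + 1))"
proof -
  have code: "V.dim_code C l k" and sub: "\<forall>U\<in>C. U \<subseteq> Vsp (l + m)"
    using Ccode_dim_code[OF assms(4)] by auto
  have "subdist U V \<ge> 2 * (int l - int k + 1)" if "U \<in> C" "V \<in> C" "U \<noteq> V" for U V
  proof -
    have dims: "fdim U = l" "fdim V = l" "fdim (U \<inter> V) \<le> k - 1"
      using code that unfolding V.dim_code_def by auto
    hence "int (fdim (U \<inter> V)) + 1 \<le> int k" using assms(1) by linarith
    thus ?thesis unfolding subdist_def dims(1,2) by (simp add: algebra_simps)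
  qed
  moreover have "\<forall>U\<in>C. fsubspace U \<and> U \<subseteq> Vsp (l + m) \<and> fdim U = l"
    using code sub unfolding V.dim_code_def by blast
  moreover have "\<forall>U\<in>C. \<forall>V\<in>C. U \<noteq> V \<longrightarrow> fdim (U \<inter> V) \<le> k - 1"
    using code unfolding V.dim_code_def by blast
  ultimately show ?thesis by blast
qed

end
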